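(* In the setting described in the context, the workload dimension $d$ equals the number $L$ of buffer pools, and the $L\times I$ matrix $M$ with $M_{li}=1$ if $i\in\mathcal P_l$ and $M_{li}=0$ otherwise is a workload matrix.
   Context: Let $I\ge1$, $J\ge I$; each activity $j\in\{1,\dots,J\}$ has a server $s(j)$ and a buffer $b(j)$ in $\{1,\dots,I\}$, with $s(j)=b(j)=j$ for $j\le I$. Let $A_{ij}=\mathbf1\{s(j)=i\}$, $C_{ij}=\mathbf1\{b(j)=i\}$, $\lambda^*\in(0,\infty)^I$, $\mu_j^*=\lambda^*_{s(j)}$, $R_{ij}=\mu_j^*C_{ij}$, $\eta>0$, $q\in(0,1)^I$ with $\sum q_i=1$, $\nu=\eta q$; assume there is a unique $x^*\in\mathbb{R}^J$ with $x^*_j=\min\{\lambda^*_j,\nu_j\}$ for $j\le I$, $Rx^*=\nu$, $Ax^*=e$, $x^*\ge0$. Activity $j$ is basic if $x_j^*>0$; after relabeling the basic activities are $1,\dots,b$, and $H$, $B$ denote the $I\times b$ submatrices of $R$, $A$ formed by their first $b$ columns. Let $\mathcal N=\{Hy:By=0,\ y\in\mathbb{R}^b\}$ and $\mathcal M=\mathcal N^\perp\subseteq\mathbb{R}^I$; the workload dimension is $d=\dim\mathcal M$, and a workload matrix is any $d\times I$ matrix whose rows form a basis of $\mathcal M$. Buffers $i,i'$ communicate directly if there are basic $j,j'$ with $b(j)=i$, $b(j')=i'$, $s(j)=s(j')$; they communicate if linked by a finite chain of directly communicating buffers. The equivalence classes of communication are the buffer pools $\mathcal P_1,\dots,\mathcal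 P_L$. *)

theory Defs
  imports "HOL-Analysis.Analysis"
begin

text \<open>Buffers/servers are indexed by a finite type 'b (so I = CARD('b)), activities by a
finite type 'a (J = CARD('a)). The injection emb :: 'b => 'a identifies the first I
activities (activity j = i for j \<le> I) with the buffers: s(emb i) = bb(emb i) = i.\<close>

definition Amat :: "('a \<Rightarrow> 'b) \<Rightarrow> 'b \<Rightarrow> 'a \<Rightarrow> real" where
  "Amat s i j = (if s j = i then 1 else 0)"

definition Cmat :: "('a \<Rightarrow> 'b) \<Rightarrow> 'b \<Rightarrow> 'a \<Rightarrow> real" where
  "Cmat bb i j = (if bb j = i then 1 else 0)"

definition mu :: "('a \<Rightarrow> 'b) \<Rightarrow> ('b \<Rightarrow> real) \<Rightarrow> 'a \<Rightarrow> real" where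
  "mu s lam j = lam (s j)"

definition Rmat :: "('a \<Rightarrow> 'b) \<Rightarrow> ('a \<Rightarrow> 'b) \<Rightarrow> ('b \<Rightarrow> real) \<Rightarrow> 'b \<Rightarrow> 'a \<Rightarrow> real" where
  "Rmat s bb lam i j = mu s lam j * Cmat bb i j"

definition nu :: "real \<Rightarrow> ('b \<Rightarrow> real) \<Rightarrow> 'b \<Rightarrow> real" where
  "nu eta q i = eta * q i"

definition feasible ::
  "('a::finite \<Rightarrow> 'b::finite) \<Rightarrow> ('a \<Rightarrow> 'b) \<Rightarrow> ('b \<Rightarrow> 'a) \<Rightarrow> ('b \<Rightarrow> real) \<Rightarrow> real
   \<Rightarrow> ('b \<Rightarrow> real) \<Rightarrow> ('a \<Rightarrow> real) \<Rightarrow> bool" where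
  "feasible s bb emb lam eta q x \<longleftrightarrow>
     (\<forall>i. x (emb i) = min (lam i) (nu eta q i)) \<and>
     (\<forall>i. (\<Sum>j\<in>UNIV. Rmat s bb lam i j * x j) = nu eta q i) \<and>
     (\<forall>i. (\<Sum>j\<in>UNIV. Amat s i j * x j) = 1) \<and>
     (\<forall>j. 0 \<le> x j)"

definition basic :: "('a \<Rightarrow> real) \<Rightarrow> 'a set" where
  "basic x = {j. 0 < x j}"

text \<open>N = {H y : B y = 0}, where H, B are the columns of R, A for the basic activities.\<close>
definition Nspace ::
  "('a::finite \<Rightarrow> 'b::finite) \<Rightarrow> ('a \<Rightarrow> 'b) \<Rightarrow> ('b \<Rightarrow> real) \<Rightarrow> ('a \<Rightarrow> real) \<Rightarrow> (real^'b) set" where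
  "Nspace s bb lam x =
     {(\<chi> i. \<Sum>j\<in>basic x. Rmat s bb lam i j * y j) | y.
        \<forall>i. (\<Sum>j\<in>basic x. Amat s i j * y j) = 0}"

definition Mspace ::
  "('a::finite \<Rightarrow> 'b::finite) \<Rightarrow> ('a \<Rightarrow> 'b) \<Rightarrow> ('b \<Rightarrow> real) \<Rightarrow> ('a \<Rightarrow> real) \<Rightarrow> (real^'b) set" where
  "Mspace s bb lam x = orthogonal_comp (Nspace s bb lam x)"

definition workload_dim ::
  "('a::finite \<Rightarrow> 'b::finite) \<Rightarrow> ('a \<Rightarrow> 'b) \<Rightarrow> ('b \<Rightarrow> real) \<Rightarrow> ('a \<Rightarrow> real) \<Rightarrow> nat" where
  "workload_dim s bb lam x = dim (Mspace s bb lam x)"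

text \<open>A d x I matrix given by its rows W 0, ..., W (d-1) is a workload matrix iff its rows
form a basis of M (distinct, linearly independent, spanning M).\<close>
definition is_workload_matrix ::
  "('a::finite \<Rightarrow> 'b::finite) \<Rightarrow> ('a \<Rightarrow> 'b) \<Rightarrow> ('b \<Rightarrow> real) \<Rightarrow> ('a \<Rightarrow> real)
   \<Rightarrow> nat \<Rightarrow> (nat \<Rightarrow> real^'b) \<Rightarrow> bool" where
  "is_workload_matrix s bb lam x d W \<longleftrightarrow>
     d = workload_dim s bb lam x \<and>
     inj_on W {..<d} \<and> independent (W ` {..<d}) \<and>
     span (W ` {..<d}) = Mspace s bb lam x"

definition direct_comm :: "('a \<Rightarrow> 'b) \<Rightarrow> ('a \<Rightarrow> 'b) \<Rightarrow> ('a \<Rightarrow> real) \<Rightarrow> ('b \<times> 'b) set" where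
  "direct_comm s bb x = {(i, i'). \<exists>j j'. j \<in> basic x \<and> j' \<in> basic x \<and>
        bb j = i \<and> bb j' = i' \<and> s j = s j'}"

definition comm :: "('a \<Rightarrow> 'b) \<Rightarrow> ('a \<Rightarrow> 'b) \<Rightarrow> ('a \<Rightarrow> real) \<Rightarrow> ('b \<times> 'b) set" where
  "comm s bb x = (direct_comm s bb x)\<^sup>*"

definition buffer_pools :: "('a \<Rightarrow> 'b) \<Rightarrow> ('a \<Rightarrow> 'b) \<Rightarrow> ('a \<Rightarrow> real) \<Rightarrow> 'b set set" where
  "buffer_pools s bb x = UNIV // comm s bb x"

end

(* A vector w lies in M = N^perp iff <H y, w> = 0 whenever B y = 0. Testing with
   y = e_j - e_j' for basic activities j, j' at a common server gives
   lam_{s(j)} (w_{b(j)} - w_{b(j')}) = 0, so w is constant on directly communicating buffers.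
   Conversely, if it is, then lam_{s(j)} w_{b(j)} depends on the basic activity j only
   through its server, so <H y, w> is a combination of the entries of B y = 0.
   Hence M consists of the vectors that are constant on each buffer pool, and the
   indicator vectors of the pools are an orthogonal basis of M. *)

theory Submission
  imports Defs
begin

definition indicator_vec :: "'n set \<Rightarrow> real^'n::finite" where
  "indicator_vec Q = (\<chi> i. if i \<in> Q then 1 else 0)"

lemma inj_indicator_vec: "inj indicator_vec"
  by (rule injI) (auto simp: indicator_vec_def vec_eq_iff split: if_splits)

lemma indicator_vec_nonzero: "Q \<noteq> {} \<Longrightarrow> indicator_vec Q \<noteq> 0"
  by (auto simp: indicator_vec_def vec_eq_iff)

lemma orthogonal_indicator_vec: "Q \<inter> Q' = {} \<Longrightarrow> orthogonal (indicator_vec Q) (indicator_vec Q')"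
  unfolding orthogonal_def inner_vec_def indicator_vec_def by (intro sum.neutral) auto

lemma independent_indicator_vec_quotient:
  assumes "equiv UNIV E"
  shows "independent (indicator_vec ` (UNIV // E))"
proof (rule pairwise_orthogonal_independent)
  show "pairwise orthogonal (indicator_vec ` (UNIV // E))"
  proof (rule pairwiseI, clarify)
    fix Q Q' assume Q: "Q \<in> UNIV // E" "Q' \<in> UNIV // E" "indicator_vec Q \<noteq> indicator_vec Q'"
    then have "Q \<inter> Q' = {}"
      using quotient_disj[OF assms Q(1,2)] by auto
    then show "orthogonal (indicator_vec Q) (indicator_vec Q')"
      by (rule orthogonal_indicator_vec)
  qed
  show "0 \<notin> indicator_vec ` (UNIV // E)"
  proof
    assume "0 \<in> indicator_vec ` (UNIV // E)"
    then obtain Q where "Q \<in> UNIV // E" "indicator_vec Q = 0"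
      by auto
    then show False
      using in_quotient_imp_non_empty[OF assms] indicator_vec_nonzero by metis
  qed
qed

lemma span_indicator_vec_quotient:
  fixes E :: "('n::finite \<times> 'n) set"
  assumes E: "equiv UNIV E"
  shows "span (indicator_vec ` (UNIV // E)) = {w :: real^'n. \<forall>(i, i') \<in> E. w $ i = w $ i'}"
proof
  have "subspace {w :: real^'n. \<forall>(i, i') \<in> E. w $ i = w $ i'}"
    by (auto simp: subspace_def case_prod_unfold)
  moreover have "indicator_vec Q $ i = indicator_vec Q $ i'"
    if "Q \<in> UNIV // E" "(i, i') \<in> E" for Q i i'
    using that in_quotient_imp_closed[OF E] E
    by (auto simp: indicator_vec_def equiv_def sym_def)
  ultimately show "span (indicator_vec ` (UNIV // E)) \<subseteq> {w. \<forall>(i, i') \<in> E. w $ i = w $ i'}"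
    by (intro span_minimal) auto
next
  show "{w. \<forall>(i, i') \<in> E. w $ i = w $ i'} \<subseteq> span (indicator_vec ` (UNIV // E))"
  proof clarify
    fix w :: "real^'n" assume w: "\<forall>(i, i') \<in> E. w $ i = w $ i'"
    define c where "c Q = w $ (SOME i. i \<in> Q)" for Q
    have "w = (\<Sum>Q\<in>UNIV // E. c Q *\<^sub>R indicator_vec Q)"
    proof (subst vec_eq_iff, intro allI)
      fix i
      have class_i: "E `` {i} \<in> UNIV // E"
        by (rule quotientI) simp
      have "i \<in> Q \<longleftrightarrow> Q = E `` {i}" if "Q \<in> UNIV // E" for Q
        using that E by (metis Image_singleton_iff equiv_class_eq_iff equiv_class_self quotientE)
      then have "(\<Sum>Q\<in>UNIV // E. c Q *\<^sub>R indicator_vec Q) $ i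
          = (\<Sum>Q\<in>UNIV // E. if Q = E `` {i} then c Q else 0)"
        unfolding sum_component by (intro sum.cong) (auto simp: indicator_vec_def)
      also have "\<dots> = c (E `` {i})"
        using class_i by simp
      also have "c (E `` {i}) = w $ i"
        using someI[of "\<lambda>k. k \<in> E `` {i}" i] E w
        by (auto simp: c_def equiv_def refl_on_def)
      finally show "w $ i = (\<Sum>Q\<in>UNIV // E. c Q *\<^sub>R indicator_vec Q) $ i" ..
    qed
    also have "\<dots> \<in> span (indicator_vec ` (UNIV // E))"
      by (intro span_sum span_scale span_base imageI)
    finally show "w \<in> span (indicator_vec ` (UNIV // E))" .
  qed
qed

lemma inner_Rmat_combination:
  "(\<chi> i. \<Sum>j\<in>J. Rmat s bb lam i j * y j) \<bullet> w = (\<Sum>j\<in>J. lam (s j) * w $ bb j * y j)"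
proof -
  have Rmat_term: "Rmat s bb lam i j * y j * w $ i = (if i = bb j then lam (s j) * w $ i * y j else 0)" for i j
    by (simp add: Rmat_def mu_def Cmat_def)
  have "(\<chi> i. \<Sum>j\<in>J. Rmat s bb lam i j * y j) \<bullet> w = (\<Sum>j\<in>J. \<Sum>i\<in>UNIV. Rmat s bb lam i j * y j * w $ i)"
    by (simp add: inner_vec_def sum_distrib_right sum.swap[of _ UNIV])
  also have "\<dots> = (\<Sum>j\<in>J. lam (s j) * w $ bb j * y j)"
    by (simp add: Rmat_term)
  finally show ?thesis .
qed

lemma sum_server_weighted_Amat:
  fixes s :: "'a \<Rightarrow> 'b::finite"
  shows "(\<Sum>j\<in>J. f (s j) * y j) = (\<Sum>k\<in>UNIV. f k * (\<Sum>j\<in>J. Amat s k j * y j))"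
proof -
  have Amat_term: "f k * Amat s k j * y j = (if k = s j then f (s j) * y j else 0)" for k j
    by (simp add: Amat_def)
  have "(\<Sum>k\<in>UNIV. f k * (\<Sum>j\<in>J. Amat s k j * y j)) = (\<Sum>j\<in>J. \<Sum>k\<in>UNIV. f k * Amat s k j * y j)"
    by (simp add: sum_distrib_left sum.swap[of _ UNIV] mult.assoc)
  also have "\<dots> = (\<Sum>j\<in>J. f (s j) * y j)"
    by (simp add: Amat_term)
  finally show ?thesis ..
qed

lemma Mspace_iff_constant_on_direct_comm:
  fixes s bb :: "'a::finite \<Rightarrow> 'b::finite"
  assumes lam_nonzero: "\<And>i. lam i \<noteq> 0"
  shows "w \<in> Mspace s bb lam x \<longleftrightarrow> (\<forall>(i, i') \<in> direct_comm s bb x. w $ i = w $ i')"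
proof
  assume "w \<in> Mspace s bb lam x"
  have orth: "(\<Sum>j\<in>basic x. lam (s j) * w $ bb j * y j) = 0"
    if "\<forall>k. (\<Sum>j\<in>basic x. Amat s k j * y j) = 0" for y
  proof -
    have "(\<chi> i. \<Sum>j\<in>basic x. Rmat s bb lam i j * y j) \<in> Nspace s bb lam x"
      using that unfolding Nspace_def by blast
    then have "(\<chi> i. \<Sum>j\<in>basic x. Rmat s bb lam i j * y j) \<bullet> w = 0"
      using \<open>w \<in> Mspace s bb lam x\<close> by (simp add: Mspace_def orthogonal_comp_def orthogonal_def)
    then show ?thesis
      by (simp add: inner_Rmat_combination)
  qed
  have "w $ bb j = w $ bb j'" if jj: "j \<in> basic x" "j' \<in> basic x" "s j = s j'" for j j'
  proof -
    define y where "y k = (if k = j then 1 else 0) - (if k = j' then 1 else (0::real))" for k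
    have sum_y: "(\<Sum>k\<in>basic x. f k * y k) = f j - f j'" for f :: "'a \<Rightarrow> real"
    proof -
      have "(\<Sum>k\<in>basic x. f k * y k)
          = (\<Sum>k\<in>basic x. if k = j then f k else 0) - (\<Sum>k\<in>basic x. if k = j' then f k else 0)"
        unfolding sum_subtractf[symmetric] by (intro sum.cong) (auto simp: y_def)
      then show ?thesis
        using jj by simp
    qed
    have "\<forall>k. (\<Sum>j\<in>basic x. Amat s k j * y j) = 0"
    proof
      fix k
      show "(\<Sum>j\<in>basic x. Amat s k j * y j) = 0"
        unfolding sum_y[of "Amat s k"] using \<open>s j = s j'\<close> by (simp add: Amat_def)
    qed
    then have "lam (s j) * w $ bb j - lam (s j') * w $ bb j' = 0"
      using orth sum_y[of "\<lambda>k. lam (s k) * w $ bb k"] by simp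
    then show "w $ bb j = w $ bb j'"
      using lam_nonzero[of "s j"] \<open>s j = s j'\<close> by simp
  qed
  then show "\<forall>(i, i') \<in> direct_comm s bb x. w $ i = w $ i'"
    unfolding direct_comm_def by blast
next
  assume const: "\<forall>(i, i') \<in> direct_comm s bb x. w $ i = w $ i'"
  define g where "g k = lam k * w $ bb (SOME j. j \<in> basic x \<and> s j = k)" for k
  have g: "lam (s j) * w $ bb j = g (s j)" if "j \<in> basic x" for j
  proof -
    define j' where "j' = (SOME j'. j' \<in> basic x \<and> s j' = s j)"
    have "j' \<in> basic x \<and> s j' = s j"
      unfolding j'_def by (rule someI[of _ j]) (use that in simp)
    then have "(bb j, bb j') \<in> direct_comm s bb x"
      using that by (force simp: direct_comm_def)
    then have "w $ bb j = w $ bb j'"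
      using const by blast
    then show ?thesis
      by (simp add: g_def j'_def)
  qed
  show "w \<in> Mspace s bb lam x"
    unfolding Mspace_def orthogonal_comp_def orthogonal_def
  proof (intro CollectI ballI)
    fix v assume "v \<in> Nspace s bb lam x"
    then obtain y where v: "v = (\<chi> i. \<Sum>j\<in>basic x. Rmat s bb lam i j * y j)"
      and By: "\<forall>k. (\<Sum>j\<in>basic x. Amat s k j * y j) = 0"
      unfolding Nspace_def by blast
    have "v \<bullet> w = (\<Sum>j\<in>basic x. g (s j) * y j)"
      unfolding v inner_Rmat_combination by (intro sum.cong) (simp_all add: g)
    also have "\<dots> = 0"
      unfolding sum_server_weighted_Amat using By by simp
    finally show "v \<bullet> w = 0" .
  qed
qed

lemma constant_on_rtrancl_iff:
  "(\<forall>(a, b) \<in> r\<^sup>*. f a = f b) \<longleftrightarrow> (\<forall>(a, b) \<in> r. f a = f b)"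
proof
  assume step: "\<forall>(a, b) \<in> r. f a = f b"
  show "\<forall>(a, b) \<in> r\<^sup>*. f a = f b"
  proof clarify
    fix a b assume "(a, b) \<in> r\<^sup>*"
    then show "f a = f b"
      by (induction rule: rtrancl_induct) (use step in auto)
  qed
qed auto

lemma Mspace_eq_constant_on_comm:
  fixes s bb :: "'a::finite \<Rightarrow> 'b::finite"
  assumes "\<And>i. lam i \<noteq> 0"
  shows "Mspace s bb lam x = {w. \<forall>(i, i') \<in> comm s bb x. w $ i = w $ i'}"
proof (intro set_eqI)
  fix w :: "real^'b"
  show "w \<in> Mspace s bb lam x \<longleftrightarrow> w \<in> {w. \<forall>(i, i') \<in> comm s bb x. w $ i = w $ i'}"
    unfolding comm_def mem_Collect_eq constant_on_rtrancl_iff[where f = "\<lambda>i. w $ i"]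
    by (rule Mspace_iff_constant_on_direct_comm[OF assms])
qed

lemma equiv_comm: "equiv UNIV (comm s bb x)"
proof -
  have "sym (direct_comm s bb x)"
    by (rule symI) (force simp: direct_comm_def)
  then show ?thesis
    unfolding comm_def equiv_def by (simp add: refl_rtrancl sym_rtrancl trans_rtrancl)
qed

theorem lemma2:
  fixes s bb :: "'a::finite \<Rightarrow> 'b::finite"
    and emb :: "'b \<Rightarrow> 'a"
    and lam q :: "'b \<Rightarrow> real"
    and eta :: real
    and xs :: "'a \<Rightarrow> real"
  assumes emb_s: "\<And>i. s (emb i) = i"
    and emb_b: "\<And>i. bb (emb i) = i"
    and lam_pos: "\<And>i. 0 < lam i"
    and eta_pos: "0 < eta"
    and q_pos: "\<And>i. 0 < q i" and q_lt1: "\<And>i. q i < 1"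
    and q_sum: "(\<Sum>i\<in>UNIV. q i) = 1"
    and xs_feas: "feasible s bb emb lam eta q xs"
    and xs_unique: "\<And>x. feasible s bb emb lam eta q x \<Longrightarrow> x = xs"
  shows "workload_dim s bb lam xs = card (buffer_pools s bb xs) \<and>
         (\<forall>P. bij_betw P {..<card (buffer_pools s bb xs)} (buffer_pools s bb xs) \<longrightarrow>
            is_workload_matrix s bb lam xs (card (buffer_pools s bb xs))
              (\<lambda>l. \<chi> i. if i \<in> P l then 1 else 0))"
proof -
  \<comment> \<open>Only \<open>lam_pos\<close> is needed: the description of M holds for every x, and the
    optimality of \<open>xs\<close> matters only through which activities are basic.\<close>
  define Pools where "Pools = buffer_pools s bb xs"
  have lam_nonzero: "\<And>i. lam i \<noteq> 0"
    using lam_pos by (metis less_irrefl)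
  have span_eq: "span (indicator_vec ` Pools) = Mspace s bb lam xs"
    unfolding Pools_def buffer_pools_def Mspace_eq_constant_on_comm[OF lam_nonzero]
    by (rule span_indicator_vec_quotient[OF equiv_comm])
  have indep: "independent (indicator_vec ` Pools)"
    unfolding Pools_def buffer_pools_def by (rule independent_indicator_vec_quotient[OF equiv_comm])
  have card_eq: "card (indicator_vec ` Pools) = card Pools"
    by (rule card_image[OF inj_on_subset[OF inj_indicator_vec subset_UNIV]])
  have dim_eq: "workload_dim s bb lam xs = card Pools"
    unfolding workload_dim_def span_eq[symmetric] dim_span dim_eq_card_independent[OF indep] card_eq ..
  show ?thesis
    unfolding Pools_def[symmetric]
  proof (intro conjI allI impI)
    fix P assume P: "bij_betw P {..<card Pools} Pools"
    have rows: "(\<lambda>l. \<chi> i. if i \<in> P l then 1 else 0) = indicator_vec \<circ> P"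
      by (simp add: indicator_vec_def o_def)
    have "inj_on (indicator_vec \<circ> P) {..<card Pools}"
      using P inj_on_subset[OF inj_indicator_vec subset_UNIV] by (intro comp_inj_on) (auto simp: bij_betw_def)
    moreover have "(indicator_vec \<circ> P) ` {..<card Pools} = indicator_vec ` Pools"
      using bij_betw_imp_surj_on[OF P] by (metis image_comp)
    ultimately show "is_workload_matrix s bb lam xs (card Pools) (\<lambda>l. \<chi> i. if i \<in> P l then 1 else 0)"
      unfolding is_workload_matrix_def rows using dim_eq indep span_eq by simp
  qed (rule dim_eq)
qed

end
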